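(* Let $a,b\in\mathrm{Im}(\mathbb{H})$ have norm one. Then $\mathbb{H}\times\mathbb{H}_{(T_{a,\bar a}\circ\sigma_{\mathbb{H}},\,T_{b,a})}$ is isomorphic to $\mathbb{H}\times\mathbb{H}_{(T_{i,\bar i}\circ\sigma_{\mathbb{H}},\,T_{i,i})}$.
   Context: For $a,b\in\mathbb{H}$, $T_{a,b}(x)=axb$ and $\sigma_{\mathbb{H}}(x)=\bar x$. On $\mathbb{H}\times\mathbb{H}$ the Cayley–Dickson product is $(x,y)\bullet(u,v)=(xu-\bar v y,\ y\bar u+vx)$; for linear maps $f,g$ of $\mathbb{H}$, $\mathbb{H}\times\mathbb{H}_{(f,g)}$ is $\mathbb{H}\times\mathbb{H}$ with product $(x,y)\odot(u,v)=(f(x),g(y))\bullet(u,v)$. *)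

theory Defs
  imports Complex_Main
begin

datatype quat = Quat (Re: real) (Im1: real) (Im2: real) (Im3: real)

fun qadd :: "quat \<Rightarrow> quat \<Rightarrow> quat" where
  "qadd (Quat a1 b1 c1 d1) (Quat a2 b2 c2 d2) = Quat (a1+a2) (b1+b2) (c1+c2) (d1+d2)"

fun qsub :: "quat \<Rightarrow> quat \<Rightarrow> quat" where
  "qsub (Quat a1 b1 c1 d1) (Quat a2 b2 c2 d2) = Quat (a1-a2) (b1-b2) (c1-c2) (d1-d2)"

fun qscale :: "real \<Rightarrow> quat \<Rightarrow> quat" where
  "qscale r (Quat a b c d) = Quat (r*a) (r*b) (r*c) (r*d)"

fun qmul :: "quat \<Rightarrow> quat \<Rightarrow> quat" where
  "qmul (Quat a1 b1 c1 d1) (Quat a2 b2 c2 d2) =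
     Quat (a1*a2 - b1*b2 - c1*c2 - d1*d2)
          (a1*b2 + b1*a2 + c1*d2 - d1*c2)
          (a1*c2 - b1*d2 + c1*a2 + d1*b2)
          (a1*d2 + b1*c2 - c1*b2 + d1*a2)"

fun qcnj :: "quat \<Rightarrow> quat" where
  "qcnj (Quat a b c d) = Quat a (-b) (-c) (-d)"

definition qi :: quat where "qi = Quat 0 1 0 0"

definition qnorm :: "quat \<Rightarrow> real" where
  "qnorm q = sqrt ((Re q)\<^sup>2 + (Im1 q)\<^sup>2 + (Im2 q)\<^sup>2 + (Im3 q)\<^sup>2)"

definition pure_imag :: "quat \<Rightarrow> bool" where
  "pure_imag q \<longleftrightarrow> Re q = 0"

definition T :: "quat \<Rightarrow> quat \<Rightarrow> quat \<Rightarrow> quat" where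
  "T a b x = qmul (qmul a x) b"

text \<open>Cayley--Dickson product on H x H: (x,y)(u,v) = (xu - conj(v) y, y conj(u) + v x).\<close>
definition cd_mul :: "quat \<times> quat \<Rightarrow> quat \<times> quat \<Rightarrow> quat \<times> quat" where
  "cd_mul p q = (case p of (x, y) \<Rightarrow> case q of (u, v) \<Rightarrow>
      (qsub (qmul x u) (qmul (qcnj v) y), qadd (qmul y (qcnj u)) (qmul v x)))"

definition twisted_mul :: "(quat \<Rightarrow> quat) \<Rightarrow> (quat \<Rightarrow> quat) \<Rightarrow>
    quat \<times> quat \<Rightarrow> quat \<times> quat \<Rightarrow> quat \<times> quat" where
  "twisted_mul f g p q = cd_mul (f (fst p), g (snd p)) q"

definition padd :: "quat \<times> quat \<Rightarrow> quat \<times> quat \<Rightarrow> quat \<times> quat" where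
  "padd p q = (qadd (fst p) (fst q), qadd (snd p) (snd q))"

definition pscale :: "real \<Rightarrow> quat \<times> quat \<Rightarrow> quat \<times> quat" where
  "pscale r p = (qscale r (fst p), qscale r (snd p))"

definition alg_iso :: "(quat \<times> quat \<Rightarrow> quat \<times> quat \<Rightarrow> quat \<times> quat) \<Rightarrow>
    (quat \<times> quat \<Rightarrow> quat \<times> quat \<Rightarrow> quat \<times> quat) \<Rightarrow> (quat \<times> quat \<Rightarrow> quat \<times> quat) \<Rightarrow> bool" where
  "alg_iso m1 m2 \<phi> \<longleftrightarrow> bij \<phi>
     \<and> (\<forall>p q. \<phi> (padd p q) = padd (\<phi> p) (\<phi> q))
     \<and> (\<forall>r p. \<phi> (pscale r p) = pscale r (\<phi> p))
     \<and> (\<forall>p q. \<phi> (m1 p q) = m2 (\<phi> p) (\<phi> q))"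

definition alg_isomorphic where
  "alg_isomorphic m1 m2 \<longleftrightarrow> (\<exists>\<phi>. alg_iso m1 m2 \<phi>)"

end

theory Submission
  imports Defs
begin

text \<open>If \<open>p\<close> and \<open>r\<close> are unit quaternions with \<open>p a p\<^sup>* = c\<close> and \<open>r b r\<^sup>* = d\<close>, then
  \<open>(x, y) \<mapsto> (p x p\<^sup>*, r y p\<^sup>*)\<close> carries the twisted product with parameters \<open>(a, b)\<close> to the one
  with parameters \<open>(c, d)\<close>: the conjugations by \<open>p\<close> cancel in pairs inside the Cayley--Dickson
  formula. Every purely imaginary unit quaternion \<open>a\<close> is conjugate to \<open>i\<close>: since \<open>a\<^sup>2 = i\<^sup>2 = -1\<close>,
  one has \<open>(i + a) a = i (i + a)\<close>, so the normalisation of \<open>i + a\<close> works unless \<open>a = -i\<close>,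
  where \<open>j\<close> does.\<close>

instantiation quat :: ring_1
begin
definition "zero_quat = Quat 0 0 0 0"
definition "one_quat = Quat 1 0 0 0"
definition "plus_quat = qadd"
definition "minus_quat = qsub"
definition "uminus_quat q = Quat (- Re q) (- Im1 q) (- Im2 q) (- Im3 q)"
definition "times_quat = qmul"
instance
proof
  fix x y z :: quat
  show "x + y + z = x + (y + z)" unfolding plus_quat_def
    by (cases x; cases y; cases z) (simp add: algebra_simps)
  show "x + y = y + x" unfolding plus_quat_def
    by (cases x; cases y) (simp add: algebra_simps)
  show "0 + x = x" unfolding plus_quat_def zero_quat_def by (cases x) simp
  show "- x + x = 0" unfolding plus_quat_def zero_quat_def uminus_quat_def by (cases x) simp
  show "x - y = x + - y" unfolding plus_quat_def minus_quat_def uminus_quat_def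
    by (cases x; cases y) simp
  show "x * y * z = x * (y * z)" unfolding times_quat_def
    by (cases x; cases y; cases z) (simp add: algebra_simps)
  show "(x + y) * z = x * z + y * z" unfolding times_quat_def plus_quat_def
    by (cases x; cases y; cases z) (simp add: algebra_simps)
  show "x * (y + z) = x * y + x * z" unfolding times_quat_def plus_quat_def
    by (cases x; cases y; cases z) (simp add: algebra_simps)
  show "1 * x = x" unfolding times_quat_def one_quat_def by (cases x) simp
  show "x * 1 = x" unfolding times_quat_def one_quat_def by (cases x) simp
  show "(0::quat) \<noteq> 1" unfolding zero_quat_def one_quat_def by simp
qed
end

lemma qcnj_mult [simp]: "qcnj (x * y) = qcnj y * qcnj x"
  unfolding times_quat_def by (cases x; cases y) (simp add: algebra_simps)

lemma qcnj_qcnj [simp]: "qcnj (qcnj x) = x"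
  by (cases x) simp

lemma qcnj_qscale: "qcnj (qscale r x) = qscale r (qcnj x)"
  by (cases x) simp

lemma qscale_mult_left: "qscale r x * y = qscale r (x * y)"
  unfolding times_quat_def by (cases x; cases y) (simp add: algebra_simps)

lemma qscale_mult_right: "x * qscale r y = qscale r (x * y)"
  unfolding times_quat_def by (cases x; cases y) (simp add: algebra_simps)

lemma mult_qcnj_self: "x * qcnj x = qscale ((qnorm x)\<^sup>2) 1"
  unfolding times_quat_def one_quat_def qnorm_def
  by (cases x) (simp add: power2_eq_square)

lemma qcnj_mult_self_commute: "qcnj x * x = x * qcnj x"
  unfolding times_quat_def by (cases x) (simp add: algebra_simps)

lemma qnorm_eq_0_iff: "qnorm x = 0 \<longleftrightarrow> x = 0"
  unfolding qnorm_def zero_quat_def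
  by (cases x) (simp add: add_nonneg_eq_0_iff)

lemma qnorm_normalize_unit:
  assumes "x \<noteq> 0"
  shows "qscale (1 / qnorm x) x * qcnj (qscale (1 / qnorm x) x) = 1"
proof -
  have "qnorm x \<noteq> 0" using assms by (simp add: qnorm_eq_0_iff)
  then show ?thesis
    by (simp add: qcnj_qscale qscale_mult_left qscale_mult_right mult_qcnj_self
        one_quat_def power2_eq_square)
qed

lemma pure_imag_unit_square:
  assumes "pure_imag a" "qnorm a = 1"
  shows "a * a = -1"
proof -
  obtain a1 a2 a3 where a: "a = Quat 0 a1 a2 a3"
    using assms(1) unfolding pure_imag_def by (cases a) auto
  have "a1\<^sup>2 + a2\<^sup>2 + a3\<^sup>2 = 1" using assms(2) by (simp add: a qnorm_def)
  then show ?thesis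
    by (simp add: a times_quat_def one_quat_def uminus_quat_def power2_eq_square)
qed

lemma intertwiner_sum:
  fixes a c :: "'a::ring_1"
  assumes "a * a = c * c"
  shows "(c + a) * a = c * (c + a)"
  using assms by (simp add: algebra_simps)

lemma unit_qcnj_intertwine:
  assumes unit: "p * qcnj p = 1" and pa: "p * a = c * p"
  shows "qcnj p * c = a * qcnj p"
proof -
  have "qcnj p * c = qcnj p * c * (p * qcnj p)" using unit by simp
  also have "\<dots> = qcnj p * p * a * qcnj p" by (simp add: pa mult.assoc)
  also have "\<dots> = a * qcnj p" using unit by (simp add: qcnj_mult_self_commute)
  finally show ?thesis .
qed

lemma pure_imag_unit_conjugate_qi:
  assumes "pure_imag a" "qnorm a = 1"
  shows "\<exists>p. p * qcnj p = 1 \<and> p * a = qi * p"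
proof (cases "qi + a = 0")
  case True
  then have "a = Quat 0 (-1) 0 0"
    by (simp add: qi_def eq_neg_iff_add_eq_0[symmetric] uminus_quat_def add.commute)
  then show ?thesis
    by (intro exI[of _ "Quat 0 0 1 0"]) (simp add: times_quat_def qi_def one_quat_def)
next
  case False
  have "qi * qi = -1"
    by (rule pure_imag_unit_square) (simp_all add: qi_def pure_imag_def qnorm_def)
  then have "(qi + a) * a = qi * (qi + a)"
    using intertwiner_sum pure_imag_unit_square[OF assms] by metis
  then have "qscale (1 / qnorm (qi + a)) (qi + a) * a = qi * qscale (1 / qnorm (qi + a)) (qi + a)"
    by (simp add: qscale_mult_left qscale_mult_right)
  with qnorm_normalize_unit[OF False] show ?thesis by blast
qed

lemma alg_iso_unit_conjugation:
  assumes p: "p * qcnj p = 1" and r: "r * qcnj r = 1"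
    and pa: "p * a = c * p" and rb: "r * b = d * r"
  shows "alg_iso (twisted_mul (T a (qcnj a) \<circ> qcnj) (T b a))
           (twisted_mul (T c (qcnj c) \<circ> qcnj) (T d c))
           (\<lambda>(x, y). (p * x * qcnj p, r * y * qcnj p))"
    (is "alg_iso ?m ?m' ?\<phi>")
proof -
  have p': "qcnj p * p = 1" and r': "qcnj r * r = 1"
    using p r by (simp_all add: qcnj_mult_self_commute)
  have cancel: "p * (qcnj p * z) = z" "qcnj p * (p * z) = z"
      "r * (qcnj r * z) = z" "qcnj r * (r * z) = z" for z
    by (simp_all flip: mult.assoc add: p r p' r')
  have cp: "qcnj p * c = a * qcnj p"
    using unit_qcnj_intertwine[OF p pa] .
  have first: "(T c (qcnj c) \<circ> qcnj) (p * x * qcnj p) = p * (T a (qcnj a) \<circ> qcnj) x * qcnj p"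
    for x
  proof -
    have "qcnj p * qcnj c = qcnj a * qcnj p" using arg_cong[OF pa, of qcnj] by simp
    then show ?thesis unfolding T_def times_quat_def[symmetric] comp_def
      by (metis cp pa mult.assoc qcnj_mult qcnj_qcnj)
  qed
  have second: "T d c (r * y * qcnj p) = r * T b a y * qcnj p" for y
    unfolding T_def times_quat_def[symmetric] by (metis cp rb mult.assoc)
  let ?\<psi> = "\<lambda>(x, y). (qcnj p * x * p, qcnj r * y * p)"
  have "?\<psi> \<circ> ?\<phi> = id" "?\<phi> \<circ> ?\<psi> = id"
    by (auto simp: fun_eq_iff mult.assoc cancel p p' r')
  then have "bij ?\<phi>" using o_bij by blast
  moreover have "?\<phi> (padd z w) = padd (?\<phi> z) (?\<phi> w)" for z w
    by (cases z; cases w) (simp add: padd_def plus_quat_def[symmetric] ring_distribs)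
  moreover have "?\<phi> (pscale s z) = pscale s (?\<phi> z)" for s z
    by (cases z) (simp add: pscale_def qscale_mult_left qscale_mult_right)
  moreover have "?\<phi> (?m z w) = ?m' (?\<phi> z) (?\<phi> w)" for z w
  proof (cases z; cases w)
    fix x y u v
    assume zw: "z = (x, y)" "w = (u, v)"
    define fx gy where "fx = (T a (qcnj a) \<circ> qcnj) x" and "gy = T b a y"
    have "?m' (?\<phi> z) (?\<phi> w) =
        cd_mul (p * fx * qcnj p, r * gy * qcnj p) (p * u * qcnj p, r * v * qcnj p)"
      by (simp only: zw twisted_mul_def prod.case fst_conv snd_conv first second fx_def gy_def)
    also have "\<dots> = ?\<phi> (cd_mul (fx, gy) (u, v))"
      by (simp add: cd_mul_def times_quat_def[symmetric] plus_quat_def[symmetric]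
          minus_quat_def[symmetric] ring_distribs mult.assoc cancel)
    finally show ?thesis by (simp add: zw twisted_mul_def fx_def gy_def)
  qed
  ultimately show ?thesis unfolding alg_iso_def by blast
qed

theorem corollary6:
  fixes a b :: quat
  assumes "pure_imag a" and "pure_imag b"
    and "qnorm a = 1" and "qnorm b = 1"
  shows "alg_isomorphic
           (twisted_mul (T a (qcnj a) \<circ> qcnj) (T b a))
           (twisted_mul (T qi (qcnj qi) \<circ> qcnj) (T qi qi))"
proof -
  obtain p where "p * qcnj p = 1" "p * a = qi * p"
    using pure_imag_unit_conjugate_qi assms(1,3) by blast
  moreover obtain r where "r * qcnj r = 1" "r * b = qi * r"
    using pure_imag_unit_conjugate_qi assms(2,4) by blast
  ultimately show ?thesis
    unfolding alg_isomorphic_def by (blast intro: alg_iso_unit_conjugation)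
qed

end
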